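(* Let $1\le r\le s\le t$ and let $u=ABCd$, $v=A'B'C'd'$ be vertices of $E3C(r,s,t)$ with $A=A'$, $B\ne B'$, $C\ne C'$ and $d=d'$. Then there exist $2r+2$ pairwise internally disjoint $u$–$v$ paths in $E3C(r,s,t)$, each of length at most $s+t+7$ if $d\in\{0,1\}$, and each of length at most $s+t+5$ if $d=2$.
   Context: The exchanged 3-ary $n$-cube $E3C(r,s,t)$ ($r,s,t\ge1$, $n=r+s+t+1$): vertices are strings written $x=ABCd$ with $A\in\{0,1,2\}^r$, $B\in\{0,1,2\}^s$, $C\in\{0,1,2\}^t$, $d\in\{0,1,2\}$. Two distinct vertices $x=ABCd$, $y=A'B'C'd'$ are adjacent iff one of: (E0) $A=A',B=B',C=C'$ and $d\ne d'$; (E1) $d=d'=0$, $A=A'$, $B=B'$ and $C,C'$ differ in exactly one position; (E2) $d=d'=1$, $A=A'$, $C=C'$ and $B,B'$ differ in exactly one position; (E3) $d=d'=2$, $B=B'$, $C=C'$ and $A,A'$ differ in exactly one position. Paths are internally disjoint if they share no vertices other than their endpoints; length = number of edges. *)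

theory Defs
  imports Main
begin

type_synonym vtx = "nat list \<times> nat list \<times> nat list \<times> nat"

definition ternary_strings :: "nat \<Rightarrow> nat list set" where
  "ternary_strings k = {w. length w = k \<and> set w \<subseteq> {0,1,2}}"

definition E3C_vertices :: "nat \<Rightarrow> nat \<Rightarrow> nat \<Rightarrow> vtx set" where
  "E3C_vertices r s t =
     {(A,B,C,d). A \<in> ternary_strings r \<and> B \<in> ternary_strings s \<and>
                 C \<in> ternary_strings t \<and> d \<in> {0,1,2}}"

definition differ_one :: "nat list \<Rightarrow> nat list \<Rightarrow> bool" where
  "differ_one X Y \<longleftrightarrow> length X = length Y \<and> card {i. i < length X \<and> X ! i \<noteq> Y ! i} = 1"

definition E3C_adj :: "nat \<Rightarrow> nat \<Rightarrow> nat \<Rightarrow> vtx \<Rightarrow> vtx \<Rightarrow> bool" where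
  "E3C_adj r s t x y \<longleftrightarrow>
     x \<in> E3C_vertices r s t \<and> y \<in> E3C_vertices r s t \<and> x \<noteq> y \<and>
     (case x of (A,B,C,d) \<Rightarrow> case y of (A',B',C',d') \<Rightarrow>
        (A = A' \<and> B = B' \<and> C = C' \<and> d \<noteq> d') \<or>
        (d = 0 \<and> d' = 0 \<and> A = A' \<and> B = B' \<and> differ_one C C') \<or>
        (d = 1 \<and> d' = 1 \<and> A = A' \<and> C = C' \<and> differ_one B B') \<or>
        (d = 2 \<and> d' = 2 \<and> B = B' \<and> C = C' \<and> differ_one A A'))"

definition E3C_path :: "nat \<Rightarrow> nat \<Rightarrow> nat \<Rightarrow> vtx \<Rightarrow> vtx \<Rightarrow> vtx list \<Rightarrow> bool" where
  "E3C_path r s t u v p \<longleftrightarrow>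
     p \<noteq> [] \<and> hd p = u \<and> last p = v \<and> distinct p \<and>
     (\<forall>i. Suc i < length p \<longrightarrow> E3C_adj r s t (p ! i) (p ! Suc i))"

definition path_len :: "vtx list \<Rightarrow> nat" where
  "path_len p = length p - 1"

definition internally_disjoint :: "vtx \<Rightarrow> vtx \<Rightarrow> vtx list \<Rightarrow> vtx list \<Rightarrow> bool" where
  "internally_disjoint u v p q \<longleftrightarrow> set p \<inter> set q \<subseteq> {u, v}"

end

theory Submission
  imports Defs
begin

text \<open>
  Every path below corrects \<open>B\<close> along a shortest Hamming
  walk on level 1 and \<open>C\<close> along one on level 0; the paths differ in how they leave \<open>u\<close> and
  enter \<open>v\<close>. For \<open>d = 2\<close> they start towards \<open>(A,B,C,1)\<close>, \<open>(A,B,C,0)\<close> and the \<open>2r\<close> vertices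
  \<open>(a,B,C,2)\<close> with \<open>a\<close> a neighbour of \<open>A\<close>; the order of the two walks, resp. the first
  coordinate \<open>a\<close>, keeps them apart. For \<open>d = 0\<close> they start towards \<open>(A,B,C,1)\<close>, towards
  \<open>(A,B,C,2)\<close> followed by a detour through a neighbour of \<open>A\<close>, and towards \<open>2r\<close> vertices
  \<open>(A,B,C[i:=x],0)\<close> with \<open>i < r\<close>. If \<open>x\<close> differs from \<open>C\<^sub>i\<close> and \<open>C'\<^sub>i\<close>, the path keeps \<open>x\<close> at
  position \<open>i\<close> until its last step, and this digit tells it apart from all other paths. If
  \<open>x = C'\<^sub>i\<close>, the path detours through its own neighbour of \<open>A\<close> and enters \<open>v\<close> through a
  neighbour of \<open>C'\<close> that depends injectively on \<open>i\<close>; if \<open>C\<close> and \<open>C'\<close> differ in one position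
  only, \<open>C'\<close> itself is that neighbour and no detour is needed. The case \<open>d = 1\<close> is the case
  \<open>d = 0\<close> with \<open>B\<close> and \<open>C\<close> exchanged; this is why \<open>r \<le> s\<close> and \<open>r \<le> t\<close> are needed.
\<close>

section \<open>Hamming walks\<close>

definition diff_positions :: "'a list \<Rightarrow> 'a list \<Rightarrow> nat set" where
  "diff_positions X Y = {i. i < length X \<and> X ! i \<noteq> Y ! i}"

lemma finite_diff_positions [simp]: "finite (diff_positions X Y)"
  by (simp add: diff_positions_def)

lemma diff_positions_Nil [simp]: "diff_positions [] Y = {}"
  by (simp add: diff_positions_def)

lemma differ_one_iff_card: "differ_one X Y \<longleftrightarrow> length X = length Y \<and> card (diff_positions X Y) = 1"
  by (simp add: differ_one_def diff_positions_def)

lemma card_diff_positions_Cons: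
  "card (diff_positions (x # xs) (y # ys)) = (if x = y then 0 else 1) + card (diff_positions xs ys)"
proof -
  have "diff_positions (x # xs) (y # ys) = (if x = y then {} else {0}) \<union> Suc ` diff_positions xs ys"
  proof (rule set_eqI)
    fix i
    show "i \<in> diff_positions (x # xs) (y # ys) \<longleftrightarrow> i \<in> (if x = y then {} else {0}) \<union> Suc ` diff_positions xs ys"
      by (cases i) (auto simp: diff_positions_def)
  qed
  then show ?thesis
    by (simp add: card_image)
qed

lemma card_diff_positions_le: "card (diff_positions X Y) \<le> length X"
  using card_mono[of "{..<length X}" "diff_positions X Y"] by (auto simp: diff_positions_def)

lemma diff_positions_empty_iff: "length X = length Y \<Longrightarrow> diff_positions X Y = {} \<longleftrightarrow> X = Y"
  by (auto simp: diff_positions_def list_eq_iff_nth_eq)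

lemma differ_one_sym: "differ_one X Y \<Longrightarrow> differ_one Y X"
  unfolding differ_one_def by (simp add: eq_commute)

lemma differ_one_neq: "differ_one X Y \<Longrightarrow> X \<noteq> Y"
  by (auto simp: differ_one_def)

lemma differ_one_list_update: "i < length X \<Longrightarrow> a \<noteq> X ! i \<Longrightarrow> differ_one X (X[i := a])"
proof -
  assume "i < length X" "a \<noteq> X ! i"
  then have "diff_positions X (X[i := a]) = {i}"
    by (auto simp: diff_positions_def nth_list_update)
  then show ?thesis
    by (simp add: differ_one_iff_card)
qed

lemma list_update_eq_list_update_iff:
  assumes "i < length X" "j < length X" "x \<noteq> X ! i" "y \<noteq> X ! j"
  shows "X[i := x] = X[j := y] \<longleftrightarrow> i = j \<and> x = y"
  using assms by (metis nth_list_update_eq nth_list_update_neq)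

fun hamming_walk :: "'a list \<Rightarrow> 'a list \<Rightarrow> 'a list list" where
  "hamming_walk [] ys = [[]]"
| "hamming_walk (x # xs) [] = [x # xs]"
| "hamming_walk (x # xs) (y # ys) =
     (if x = y then [] else [x # xs]) @ map (Cons y) (hamming_walk xs ys)"

definition hamming_between :: "'a list \<Rightarrow> 'a list \<Rightarrow> 'a list \<Rightarrow> bool" where
  "hamming_between X Y Z \<longleftrightarrow> length Z = length X \<and> (\<forall>k < length X. Z ! k = X ! k \<or> Z ! k = Y ! k)"

lemma hamming_walk_not_Nil [simp]: "hamming_walk X Y \<noteq> []"
  by (induction X Y rule: hamming_walk.induct) auto

lemma hd_hamming_walk [simp]: "length X = length Y \<Longrightarrow> hd (hamming_walk X Y) = X"
  by (induction X Y rule: hamming_walk.induct) (auto simp: hd_map)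

lemma last_hamming_walk [simp]: "length X = length Y \<Longrightarrow> last (hamming_walk X Y) = Y"
  by (induction X Y rule: hamming_walk.induct) (auto simp: last_map)

lemma length_hamming_walk:
  "length X = length Y \<Longrightarrow> length (hamming_walk X Y) = card (diff_positions X Y) + 1"
  by (induction X Y rule: hamming_walk.induct) (auto simp: card_diff_positions_Cons)

lemma distinct_hamming_walk: "distinct (hamming_walk X Y)"
  by (induction X Y rule: hamming_walk.induct) (auto simp: distinct_map)

lemma hamming_walk_same [simp]: "hamming_walk X X = [X]"
  by (induction X) auto

lemma hamming_between_Cons:
  "hamming_between (x # xs) (y # ys) (z # zs) \<longleftrightarrow> (z = x \<or> z = y) \<and> hamming_between xs ys zs"
  by (auto simp: hamming_between_def nth_Cons' less_Suc_eq_0_disj)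

lemma hamming_between_walk:
  "length X = length Y \<Longrightarrow> Z \<in> set (hamming_walk X Y) \<Longrightarrow> hamming_between X Y Z"
proof (induction X Y arbitrary: Z rule: hamming_walk.induct)
  case (1 ys)
  then show ?case by (simp add: hamming_between_def)
next
  case (3 x xs y ys)
  then show ?case
    by (auto simp: hamming_between_Cons split: if_splits)
      (auto simp: hamming_between_def)
qed simp

lemma hamming_between_ends: "length X = length Y \<Longrightarrow> hamming_between X Y X \<and> hamming_between X Y Y"
  by (simp add: hamming_between_def)

lemma hamming_between_trans:
  assumes "hamming_between X Y Z" "hamming_between X Y Z'" "hamming_between Z Z' W"
  shows "hamming_between X Y W"
  unfolding hamming_between_def
proof (intro conjI allI impI)
  show "length W = length X"
    using assms by (simp add: hamming_between_def)
  fix k assume "k < length X"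
  with assms have "W ! k = Z ! k \<or> W ! k = Z' ! k" "Z ! k = X ! k \<or> Z ! k = Y ! k"
    "Z' ! k = X ! k \<or> Z' ! k = Y ! k"
    by (simp_all add: hamming_between_def)
  then show "W ! k = X ! k \<or> W ! k = Y ! k"
    by auto
qed

lemma hamming_between_update_nth:
  "hamming_between (X[i := x]) (Y[i := x]) W \<Longrightarrow> i < length X \<Longrightarrow> length Y = length X \<Longrightarrow> W ! i = x"
  by (auto simp: hamming_between_def dest!: spec[of _ i])

lemma hamming_between_update_absurd:
  assumes "hamming_between X Y W" "hamming_between (X[i := x]) (Y[i := x]) W"
    and "i < length X" "length Y = length X" "x \<noteq> X ! i" "x \<noteq> Y ! i"
  shows False
proof -
  have "W ! i = X ! i \<or> W ! i = Y ! i"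
    using assms(1,3) by (simp add: hamming_between_def)
  with hamming_between_update_nth[OF assms(2-4)] assms(5,6) show False
    by auto
qed

lemma hamming_between_update_unique:
  assumes "hamming_between (X[i := x]) (Y[i := x]) W" "hamming_between (X[j := y]) (Y[j := y]) W"
    and "i < length X" "j < length X" "length Y = length X" "x \<noteq> X ! i" "x \<noteq> Y ! i"
  shows "i = j \<and> x = y"
proof -
  have Wi: "W ! i = x"
    using hamming_between_update_nth[OF assms(1,3,5)] .
  have "i = j"
  proof (rule ccontr)
    assume "i \<noteq> j"
    with assms(2,3) have "W ! i = X ! i \<or> W ! i = Y ! i"
      by (auto simp: hamming_between_def dest!: spec[of _ i])
    with Wi assms(6,7) show False
      by auto
  qed
  with Wi hamming_between_update_nth[OF assms(2,4,5)] show ?thesis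
    by simp
qed

lemma successively_differ_one_hamming_walk:
  "length X = length Y \<Longrightarrow> successively differ_one (hamming_walk X Y)"
proof (induction X Y rule: hamming_walk.induct)
  case (3 x xs y ys)
  have Cons_same: "differ_one (y # X) (y # Y) \<longleftrightarrow> differ_one X Y" for X Y
    by (simp add: differ_one_iff_card card_diff_positions_Cons)
  have Cons_diff: "differ_one (x # xs) (y # xs)" if "x \<noteq> y"
    using that diff_positions_empty_iff[of xs xs] by (simp add: differ_one_iff_card card_diff_positions_Cons)
  from 3 show ?case
    by (auto simp: successively_map Cons_same Cons_diff successively_append_iff successively_Cons hd_map)
qed auto

lemma length_ternary: "X \<in> ternary_strings k \<Longrightarrow> length X = k"
  by (simp add: ternary_strings_def)

lemma nth_ternary_le:
  assumes "X \<in> ternary_strings k" "i < k"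
  shows "X ! i \<le> 2"
proof -
  have "X ! i \<in> {0, 1, 2}"
    using assms nth_mem[of i X] unfolding ternary_strings_def by blast
  then show ?thesis by auto
qed

lemma list_update_ternary: "X \<in> ternary_strings k \<Longrightarrow> a \<le> 2 \<Longrightarrow> X[i := a] \<in> ternary_strings k"
  unfolding ternary_strings_def using set_update_subset_insert[of X i a] by auto

lemma hamming_between_ternary:
  assumes X: "X \<in> ternary_strings k" and Y: "Y \<in> ternary_strings k" and Z: "hamming_between X Y Z"
  shows "Z \<in> ternary_strings k"
proof -
  have digit: "Z ! j \<le> 2" if "j < length Z" for j
    using that X Y Z nth_ternary_le[OF X, of j] nth_ternary_le[OF Y, of j]
    by (auto simp: hamming_between_def length_ternary)
  have "set Z \<subseteq> {0, 1, 2}"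
  proof
    fix z assume "z \<in> set Z"
    then obtain j where "j < length Z" "z = Z ! j"
      by (auto simp: in_set_conv_nth)
    with digit[of j] show "z \<in> {0, 1, 2}"
      by auto
  qed
  with X Z show ?thesis
    by (simp add: ternary_strings_def hamming_between_def)
qed

lemma hamming_walk_ternary:
  assumes "X \<in> ternary_strings k" "Y \<in> ternary_strings k" "Z \<in> set (hamming_walk X Y)"
  shows "Z \<in> ternary_strings k"
  using assms hamming_between_walk[of X Y Z] hamming_between_ternary[of X k Y Z]
  by (simp add: length_ternary)

lemma length_hamming_walk_ternary:
  "X \<in> ternary_strings k \<Longrightarrow> Y \<in> ternary_strings k \<Longrightarrow> length (hamming_walk X Y) \<le> k + 1"
  using length_hamming_walk[of X Y] card_diff_positions_le[of X Y] by (simp add: length_ternary)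

definition third_digit :: "nat \<Rightarrow> nat \<Rightarrow> nat" where
  "third_digit a b = (if a \<noteq> 0 \<and> b \<noteq> 0 then 0 else if a \<noteq> 1 \<and> b \<noteq> 1 then 1 else 2)"

lemma third_digit_le: "third_digit a b \<le> 2"
  and third_digit_neq: "third_digit a b \<noteq> a" "third_digit a b \<noteq> b"
  by (auto simp: third_digit_def)

lemma ternary_neighbours_exist:
  assumes A: "A \<in> ternary_strings r"
  obtains ns where "length ns = 2 * r" "distinct ns" "\<forall>a \<in> set ns. a \<in> ternary_strings r \<and> differ_one A a"
proof
  define shift where "shift j i = A[i := (A ! i + j) mod 3]" for j i :: nat
  let ?ns = "map (shift 1) [0..<r] @ map (shift 2) [0..<r]"
  have shift_neq: "(A ! i + j) mod 3 \<noteq> A ! i" if "i < r" "j \<in> {1, 2}" for i j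
  proof -
    have "A ! i = 0 \<or> A ! i = 1 \<or> A ! i = 2"
      using nth_ternary_le[OF A that(1)] by auto
    with that(2) show ?thesis by auto
  qed
  have step_mod_3_neq: "(a + 1) mod 3 \<noteq> (a + 2) mod 3" for a :: nat
    by presburger
  have shift_eq_iff: "shift j i = shift j' i' \<longleftrightarrow> i = i' \<and> j = j'"
    if "i < r" "i' < r" "j \<in> {1, 2}" "j' \<in> {1, 2}" for i i' j j'
  proof -
    have "(A ! i + j) mod 3 = (A ! i + j') mod 3 \<longleftrightarrow> j = j'"
      using that(3,4) step_mod_3_neq[of "A ! i"] by auto
    moreover have "shift j i = shift j' i' \<longleftrightarrow> i = i' \<and> (A ! i + j) mod 3 = (A ! i' + j') mod 3"
      unfolding shift_def
      using that shift_neq[of i j] shift_neq[of i' j'] length_ternary[OF A]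
      by (intro list_update_eq_list_update_iff) auto
    ultimately show ?thesis by auto
  qed
  show "length ?ns = 2 * r" by simp
  show "distinct ?ns"
    by (auto simp: distinct_map inj_on_def shift_eq_iff)
  have "shift j i \<in> ternary_strings r \<and> differ_one A (shift j i)" if "i < r" "j \<in> {1, 2}" for i j
    unfolding shift_def using that A shift_neq[OF that] length_ternary[OF A]
    by (simp add: list_update_ternary differ_one_list_update)
  then show "\<forall>a \<in> set ?ns. a \<in> ternary_strings r \<and> differ_one A a"
    by auto
qed

section \<open>Paths in \<open>E3C(r,s,t)\<close>\<close>

lemma E3C_vertices_iff [simp]:
  "(A, B, C, d) \<in> E3C_vertices r s t \<longleftrightarrow>
     A \<in> ternary_strings r \<and> B \<in> ternary_strings s \<and> C \<in> ternary_strings t \<and> d \<le> 2"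
  by (auto simp: E3C_vertices_def)

lemma E3C_adj_iff:
  "E3C_adj r s t (A, B, C, d) (A', B', C', d') \<longleftrightarrow>
     (A, B, C, d) \<in> E3C_vertices r s t \<and> (A', B', C', d') \<in> E3C_vertices r s t \<and>
     ((A = A' \<and> B = B' \<and> C = C' \<and> d \<noteq> d') \<or>
      (d = 0 \<and> d' = 0 \<and> A = A' \<and> B = B' \<and> differ_one C C') \<or>
      (d = 1 \<and> d' = 1 \<and> A = A' \<and> C = C' \<and> differ_one B B') \<or>
      (d = 2 \<and> d' = 2 \<and> B = B' \<and> C = C' \<and> differ_one A A'))"
  unfolding E3C_adj_def by (auto dest: differ_one_neq)

definition E3C_disjoint_paths :: "nat \<Rightarrow> nat \<Rightarrow> nat \<Rightarrow> vtx \<Rightarrow> vtx \<Rightarrow> nat \<Rightarrow> nat \<Rightarrow> bool" where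
  "E3C_disjoint_paths r s t u v n L \<longleftrightarrow> (\<exists>P :: vtx list list. length P = n \<and>
     (\<forall>i < length P. E3C_path r s t u v (P ! i) \<and> path_len (P ! i) \<le> L) \<and>
     (\<forall>i < length P. \<forall>j < length P. i \<noteq> j \<longrightarrow> internally_disjoint u v (P ! i) (P ! j)))"

lemma successively_Cons_snoc_iff:
  "M \<noteq> [] \<Longrightarrow> successively P (u # M @ [v]) \<longleftrightarrow> P u (hd M) \<and> successively P M \<and> P (last M) v"
  using successively_append_iff[of P "u # M" "[v]"] by (cases M) (auto simp: successively_Cons)

lemma E3C_path_Cons_snoc:
  assumes "M \<noteq> []" "E3C_adj r s t u (hd M)" "successively (E3C_adj r s t) M" "E3C_adj r s t (last M) v"
    and "distinct M" "u \<notin> set M" "v \<notin> set M" "u \<noteq> v"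
  shows "E3C_path r s t u v (u # M @ [v])"
proof -
  have "successively (E3C_adj r s t) (u # M @ [v])"
    using assms(1-4) by (simp add: successively_Cons_snoc_iff)
  with assms(5-8) show ?thesis
    unfolding E3C_path_def successively_conv_nth by auto
qed

lemma E3C_disjoint_paths_from_interiors:
  assumes "distinct ks"
    and "\<And>k. k \<in> set ks \<Longrightarrow> E3C_path r s t u v (u # M k @ [v]) \<and> length (M k) < L"
    and "\<And>k k'. k \<in> set ks \<Longrightarrow> k' \<in> set ks \<Longrightarrow> k \<noteq> k' \<Longrightarrow> set (M k) \<inter> set (M k') = {}"
  shows "E3C_disjoint_paths r s t u v (length ks) L"
  unfolding E3C_disjoint_paths_def
proof (intro exI conjI allI impI)
  let ?P = "map (\<lambda>k. u # M k @ [v]) ks"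
  show "length ?P = length ks" by simp
  fix i assume i: "i < length ?P"
  then show "E3C_path r s t u v (?P ! i)" "path_len (?P ! i) \<le> L"
    using assms(2)[of "ks ! i"] by (auto simp: path_len_def)
  fix j assume "j < length ?P" "i \<noteq> j"
  with i assms(1) have "set (M (ks ! i)) \<inter> set (M (ks ! j)) = {}"
    by (intro assms(3)) (auto simp: nth_eq_iff_index_eq)
  with i \<open>j < length ?P\<close> show "internally_disjoint u v (?P ! i) (?P ! j)"
    by (auto simp: internally_disjoint_def)
qed

definition BC_route :: "nat list \<Rightarrow> nat list \<Rightarrow> nat list \<Rightarrow> nat list \<Rightarrow> nat list \<Rightarrow> vtx list" where
  "BC_route a X X' Z Z' =
     map (\<lambda>Y. (a, Y, Z, 1)) (hamming_walk X X') @ map (\<lambda>W. (a, X', W, 0)) (hamming_walk Z Z')"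

definition CB_route :: "nat list \<Rightarrow> nat list \<Rightarrow> nat list \<Rightarrow> nat list \<Rightarrow> nat list \<Rightarrow> vtx list" where
  "CB_route a X X' Z Z' =
     map (\<lambda>W. (a, X, W, 0)) (hamming_walk Z Z') @ map (\<lambda>Y. (a, Y, Z', 1)) (hamming_walk X X')"

lemma BC_route_not_Nil [simp]: "BC_route a X X' Z Z' \<noteq> []"
  and CB_route_not_Nil [simp]: "CB_route a X X' Z Z' \<noteq> []"
  by (simp_all add: BC_route_def CB_route_def)

lemma hd_BC_route [simp]: "length X = length X' \<Longrightarrow> hd (BC_route a X X' Z Z') = (a, X, Z, 1)"
  and hd_CB_route [simp]: "length Z = length Z' \<Longrightarrow> hd (CB_route a X X' Z Z') = (a, X, Z, 0)"
  and last_BC_route [simp]: "length Z = length Z' \<Longrightarrow> last (BC_route a X X' Z Z') = (a, X', Z', 0)"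
  and last_CB_route [simp]: "length X = length X' \<Longrightarrow> last (CB_route a X X' Z Z') = (a, X', Z', 1)"
  by (simp_all add: BC_route_def CB_route_def hd_map last_map)

lemma distinct_BC_route: "distinct (BC_route a X X' Z Z')"
  and distinct_CB_route: "distinct (CB_route a X X' Z Z')"
  by (auto simp: BC_route_def CB_route_def distinct_map inj_on_def distinct_hamming_walk)

lemma length_BC_route:
  "length X = length X' \<Longrightarrow> length Z = length Z' \<Longrightarrow>
   length (BC_route a X X' Z Z') = card (diff_positions X X') + card (diff_positions Z Z') + 2"
  by (simp add: BC_route_def length_hamming_walk)

context
  fixes r s t :: nat and a X X' Z Z' :: "nat list"
  assumes a: "a \<in> ternary_strings r"
    and X: "X \<in> ternary_strings s" and X': "X' \<in> ternary_strings s"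
    and Z: "Z \<in> ternary_strings t" and Z': "Z' \<in> ternary_strings t"
begin

private lemma same_lengths: "length X = length X'" "length Z = length Z'"
  using X X' Z Z' by (simp_all add: length_ternary)

private lemma successively_B_walk:
  "W \<in> ternary_strings t \<Longrightarrow> successively (E3C_adj r s t) (map (\<lambda>Y. (a, Y, W, 1)) (hamming_walk X X'))"
  unfolding successively_map
  by (rule successively_mono[OF successively_differ_one_hamming_walk[OF same_lengths(1)]])
    (use a X X' in \<open>auto simp: E3C_adj_iff dest: hamming_walk_ternary\<close>)

private lemma successively_C_walk:
  "Y \<in> ternary_strings s \<Longrightarrow> successively (E3C_adj r s t) (map (\<lambda>W. (a, Y, W, 0)) (hamming_walk Z Z'))"
  unfolding successively_map
  by (rule successively_mono[OF successively_differ_one_hamming_walk[OF same_lengths(2)]])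
    (use a Z Z' in \<open>auto simp: E3C_adj_iff dest: hamming_walk_ternary\<close>)

lemma successively_BC_route: "successively (E3C_adj r s t) (BC_route a X X' Z Z')"
  using successively_B_walk[OF Z] successively_C_walk[OF X'] same_lengths a X' Z
  by (simp add: BC_route_def successively_append_iff hd_map last_map E3C_adj_iff)

lemma successively_CB_route: "successively (E3C_adj r s t) (CB_route a X X' Z Z')"
  using successively_B_walk[OF Z'] successively_C_walk[OF X] same_lengths a X Z'
  by (simp add: CB_route_def successively_append_iff hd_map last_map E3C_adj_iff)

lemma length_BC_route_le: "length (BC_route a X X' Z Z') \<le> s + t + 2"
  and length_CB_route_le: "length (CB_route a X X' Z Z') \<le> s + t + 2"
  using length_hamming_walk_ternary[OF X X'] length_hamming_walk_ternary[OF Z Z']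
  by (simp_all add: BC_route_def CB_route_def)

end

definition BC_route_at2 :: "nat list \<Rightarrow> nat list \<Rightarrow> nat list \<Rightarrow> nat list \<Rightarrow> nat list \<Rightarrow> vtx list" where
  "BC_route_at2 a X X' Z Z' = (a, X, Z, 2) # BC_route a X X' Z Z' @ [(a, X', Z', 2)]"

lemma BC_route_at2_not_Nil [simp]: "BC_route_at2 a X X' Z Z' \<noteq> []"
  and hd_BC_route_at2 [simp]: "hd (BC_route_at2 a X X' Z Z') = (a, X, Z, 2)"
  and last_BC_route_at2 [simp]: "last (BC_route_at2 a X X' Z Z') = (a, X', Z', 2)"
  by (simp_all add: BC_route_at2_def)

lemma distinct_BC_route_at2: "X \<noteq> X' \<Longrightarrow> distinct (BC_route_at2 a X X' Z Z')"
  by (auto simp: BC_route_at2_def distinct_BC_route) (auto simp: BC_route_def)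

lemma length_BC_route_at2: "length (BC_route_at2 a X X' Z Z') = length (BC_route a X X' Z Z') + 2"
  by (simp add: BC_route_at2_def)

lemma successively_BC_route_at2:
  assumes "a \<in> ternary_strings r" "X \<in> ternary_strings s" "X' \<in> ternary_strings s"
    "Z \<in> ternary_strings t" "Z' \<in> ternary_strings t"
  shows "successively (E3C_adj r s t) (BC_route_at2 a X X' Z Z')"
  using assms successively_BC_route[OF assms]
  by (simp add: BC_route_at2_def successively_Cons_snoc_iff length_ternary E3C_adj_iff)

section \<open>Endpoints on level 2\<close>

datatype route2 = B_first | C_first | Via_A "nat list"

locale E3C_vertex_pair =
  fixes r s t :: nat and A B B' C C' :: "nat list" and ns :: "nat list list"
  assumes A [simp]: "A \<in> ternary_strings r"
    and B [simp]: "B \<in> ternary_strings s" and B' [simp]: "B' \<in> ternary_strings s"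
    and C [simp]: "C \<in> ternary_strings t" and C' [simp]: "C' \<in> ternary_strings t"
    and B_neq: "B \<noteq> B'" and C_neq: "C \<noteq> C'"
    and length_ns: "length ns = 2 * r" and distinct_ns: "distinct ns"
    and ns_neighbours: "\<And>a. a \<in> set ns \<Longrightarrow> a \<in> ternary_strings r \<and> differ_one A a"
begin

lemma lengths [simp]: "length A = r" "length B = s" "length B' = s" "length C = t" "length C' = t"
  by (simp_all add: length_ternary)

lemma ns_neq_A: "a \<in> set ns \<Longrightarrow> a \<noteq> A"
  using ns_neighbours differ_one_neq by blast

fun interior2 :: "route2 \<Rightarrow> vtx list" where
  "interior2 B_first = BC_route A B B' C C'"
| "interior2 C_first = CB_route A B B' C C'"
| "interior2 (Via_A a) = BC_route_at2 a B B' C C'"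

definition routes2 :: "route2 list" where
  "routes2 = [B_first, C_first] @ map Via_A ns"

lemma interior2_path:
  assumes "k \<in> set routes2"
  shows "E3C_path r s t (A, B, C, 2) (A, B', C', 2) ((A, B, C, 2) # interior2 k @ [(A, B', C', 2)])
    \<and> length (interior2 k) < s + t + 5"
proof (cases k)
  case B_first
  show ?thesis
    unfolding B_first interior2.simps
    using B_neq length_BC_route_le[of A r B s B' C t C']
    by (intro conjI E3C_path_Cons_snoc)
      (auto simp: successively_BC_route distinct_BC_route E3C_adj_iff, auto simp: BC_route_def)
next
  case C_first
  show ?thesis
    unfolding C_first interior2.simps
    using B_neq length_CB_route_le[of A r B s B' C t C']
    by (intro conjI E3C_path_Cons_snoc)
      (auto simp: successively_CB_route distinct_CB_route E3C_adj_iff, auto simp: CB_route_def)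
next
  case (Via_A a)
  with assms have a: "a \<in> ternary_strings r" "differ_one A a" "differ_one a A"
    using ns_neighbours differ_one_sym by (auto simp: routes2_def)
  show ?thesis
    unfolding Via_A interior2.simps
    using a B_neq differ_one_neq[OF a(2)] length_BC_route_le[of a r B s B' C t C']
    by (intro conjI E3C_path_Cons_snoc)
      (auto simp: successively_BC_route_at2 distinct_BC_route_at2 length_BC_route_at2 E3C_adj_iff,
       auto simp: BC_route_at2_def BC_route_def)
qed

lemma interior2_disjoint:
  assumes "k \<in> set routes2" "k' \<in> set routes2" "k \<noteq> k'"
  shows "set (interior2 k) \<inter> set (interior2 k') = {}"
proof -
  have "a \<noteq> A" if "Via_A a \<in> {k, k'}" for a
    using that assms ns_neq_A by (auto simp: routes2_def)
  then show ?thesis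
    using assms(3) B_neq C_neq by (cases k; cases k') (auto simp: BC_route_at2_def BC_route_def CB_route_def)
qed

theorem disjoint_paths_level2:
  "E3C_disjoint_paths r s t (A, B, C, 2) (A, B', C', 2) (2 * r + 2) (s + t + 5)"
proof -
  have "distinct routes2"
    using distinct_ns ns_neq_A by (auto simp: routes2_def distinct_map inj_on_def)
  from E3C_disjoint_paths_from_interiors[OF this interior2_path interior2_disjoint]
  show ?thesis
    by (simp add: routes2_def length_ns)
qed

end

section \<open>Endpoints on level 0\<close>

definition cyclic_succ :: "nat set \<Rightarrow> nat \<Rightarrow> nat" where
  "cyclic_succ D i = (if \<exists>j \<in> D. i < j then LEAST j. j \<in> D \<and> i < j else LEAST j. j \<in> D)"

lemma cyclic_succ_in: "i \<in> D \<Longrightarrow> cyclic_succ D i \<in> D"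
  unfolding cyclic_succ_def by (auto intro: LeastI2_ex)

lemma cyclic_succ_gt: "\<exists>j \<in> D. i < j \<Longrightarrow> i < cyclic_succ D i"
  unfolding cyclic_succ_def by (auto intro: LeastI2_ex)

lemma cyclic_succ_le: "j \<in> D \<Longrightarrow> i < j \<Longrightarrow> cyclic_succ D i \<le> j"
  unfolding cyclic_succ_def by (auto intro: Least_le)

lemma cyclic_succ_wrap: "\<not> (\<exists>j \<in> D. i < j) \<Longrightarrow> j \<in> D \<Longrightarrow> cyclic_succ D i \<le> j"
  unfolding cyclic_succ_def by (auto intro: Least_le)

lemma cyclic_succ_neq:
  assumes "i \<in> D" "D \<noteq> {i}"
  shows "cyclic_succ D i \<noteq> i"
proof (cases "\<exists>j \<in> D. i < j")
  case True
  then show ?thesis using cyclic_succ_gt[OF True] by simp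
next
  case False
  obtain j where "j \<in> D" "j \<noteq> i" using assms by blast
  with False have "j < i" by auto
  then show ?thesis using cyclic_succ_wrap[OF False \<open>j \<in> D\<close>] by simp
qed

lemma inj_on_cyclic_succ: "inj_on (cyclic_succ D) D"
proof -
  have "cyclic_succ D i \<noteq> cyclic_succ D i'" if "i \<in> D" "i' \<in> D" "i < i'" for i i'
  proof (cases "\<exists>j \<in> D. i' < j")
    case True
    then show ?thesis
      using cyclic_succ_le[OF that(2,3)] cyclic_succ_gt[OF True] by simp
  next
    case False
    then show ?thesis
      using cyclic_succ_wrap[OF False that(1)] cyclic_succ_gt[of D i] that by fastforce
  qed
  then show ?thesis
    by (intro inj_onI) (metis neq_iff)
qed

datatype route0 = Level1 | Level2 | Off nat nat | Flip nat

locale E3C_vertex_pair_level0 = E3C_vertex_pair +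
  assumes r_pos: "1 \<le> r" and r_le_t: "r \<le> t"
begin

abbreviation DC :: "nat set" where
  "DC \<equiv> diff_positions C C'"

definition B_pos :: nat where
  "B_pos = (SOME k. k \<in> diff_positions B B')"

definition B_detour :: "nat list" where
  "B_detour = B[B_pos := third_digit (B ! B_pos) (B' ! B_pos)]"

definition a_Level2 :: "nat list" where
  "a_Level2 = ns ! 0"

definition a_Flip :: "nat \<Rightarrow> nat list" where
  "a_Flip i = ns ! Suc i"

definition first_C :: "nat \<Rightarrow> nat list" where
  "first_C i = C[i := C' ! i]"

text \<open>Through the cyclic successor, distinct \<open>Flip\<close> routes enter \<open>v\<close> through distinct neighbours
  \<open>last_C i\<close> of \<open>C'\<close>.\<close>

definition last_C :: "nat \<Rightarrow> nat list" where
  "last_C i = C'[cyclic_succ DC i := C ! cyclic_succ DC i]"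

definition off1 :: "nat \<Rightarrow> nat" where
  "off1 i = third_digit (C ! i) (C' ! i)"

definition off2 :: "nat \<Rightarrow> nat" where
  "off2 i = third_digit (C ! i) (off1 i)"

text \<open>When \<open>C\<close> and \<open>C'\<close> differ in several positions, \<open>Level1\<close> walks \<open>C\<close> on level 0 with the
  \<open>B\<close>-component \<open>B_detour\<close>, which no other route uses.\<close>

fun interior0 :: "route0 \<Rightarrow> vtx list" where
  "interior0 Level1 =
     (if card DC = 1 then BC_route A B B' C C
      else (A, B, C, 1) # (A, B_detour, C, 1) # CB_route A B_detour B' C C')"
| "interior0 Level2 = (A, B, C, 2) # BC_route_at2 a_Level2 B B' C C' @ [(A, B', C', 2)]"
| "interior0 (Off i x) = (A, B, C[i := x], 0) # BC_route A B B' (C[i := x]) (C'[i := x])"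
| "interior0 (Flip i) =
     (if card DC = 1 then CB_route A B B' C' C'
      else (A, B, first_C i, 0) # (A, B, first_C i, 2) #
        BC_route_at2 (a_Flip i) B B' (first_C i) (last_C i) @ [(A, B', last_C i, 2), (A, B', last_C i, 0)])"

definition second_route :: "nat \<Rightarrow> route0" where
  "second_route i = (if C ! i = C' ! i then Off i (off2 i) else Flip i)"

definition routes0 :: "route0 list" where
  "routes0 = [Level1, Level2] @ map (\<lambda>i. Off i (off1 i)) [0..<r] @ map second_route [0..<r]"

lemma length_routes0: "length routes0 = 2 * r + 2"
  by (simp add: routes0_def)

lemma off_digits: "off1 i \<noteq> C ! i" "off1 i \<noteq> C' ! i" "off2 i \<noteq> C ! i" "off2 i \<noteq> off1 i"
  "off1 i \<le> 2" "off2 i \<le> 2"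
  by (simp_all add: off1_def off2_def third_digit_neq third_digit_le)

lemma distinct_routes0: "distinct routes0"
  using off_digits(4)[symmetric] by (auto simp: routes0_def second_route_def distinct_map inj_on_def)

lemma Off_in_routes0:
  assumes "Off i x \<in> set routes0"
  shows "i < r" "x \<le> 2" "x \<noteq> C ! i" "x \<noteq> C' ! i"
proof -
  have "(x = off1 i \<or> x = off2 i \<and> C ! i = C' ! i) \<and> i < r"
    using assms by (auto simp: routes0_def second_route_def split: if_splits)
  then show "i < r" "x \<le> 2" "x \<noteq> C ! i" "x \<noteq> C' ! i"
    using off_digits off_digits(1-4)[symmetric] by auto
qed

lemma Flip_in_routes0:
  assumes "Flip i \<in> set routes0"
  shows "i < r" "i \<in> DC"
  using assms r_le_t by (auto simp: routes0_def second_route_def diff_positions_def split: if_splits)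

lemma a_Level2: "a_Level2 \<in> ternary_strings r" "differ_one A a_Level2" "differ_one a_Level2 A" "a_Level2 \<noteq> A"
  using r_pos length_ns ns_neighbours[of "ns ! 0"] ns_neq_A[of "ns ! 0"]
  by (auto simp: a_Level2_def differ_one_sym)

lemma a_Flip:
  assumes "i < r"
  shows "a_Flip i \<in> ternary_strings r" "differ_one A (a_Flip i)" "differ_one (a_Flip i) A" "a_Flip i \<noteq> A"
    "a_Flip i \<noteq> a_Level2"
  using assms length_ns ns_neighbours[of "ns ! Suc i"] ns_neq_A[of "ns ! Suc i"] distinct_ns
  by (auto simp: a_Flip_def a_Level2_def differ_one_sym nth_eq_iff_index_eq)

lemma a_Flip_eq_iff: "i < r \<Longrightarrow> j < r \<Longrightarrow> a_Flip i = a_Flip j \<longleftrightarrow> i = j"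
  using length_ns distinct_ns by (auto simp: a_Flip_def nth_eq_iff_index_eq)

lemma B_detour: "B_detour \<in> ternary_strings s" "differ_one B B_detour" "B_detour \<noteq> B" "B_detour \<noteq> B'"
proof -
  have "diff_positions B B' \<noteq> {}"
    using B_neq diff_positions_empty_iff[of B B'] by simp
  then have "B_pos \<in> diff_positions B B'"
    unfolding B_pos_def by (simp add: some_in_eq)
  then have pos: "B_pos < s" "B ! B_pos \<noteq> B' ! B_pos"
    by (simp_all add: diff_positions_def)
  show "B_detour \<in> ternary_strings s" "differ_one B B_detour"
    unfolding B_detour_def using pos
    by (simp_all add: list_update_ternary third_digit_le differ_one_list_update third_digit_neq)
  then show "B_detour \<noteq> B" by (simp add: differ_one_neq differ_one_sym)
  have "B_detour ! B_pos \<noteq> B' ! B_pos"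
    unfolding B_detour_def using pos by (simp add: third_digit_neq)
  then show "B_detour \<noteq> B'" by auto
qed

lemma first_C:
  assumes "i \<in> DC"
  shows "first_C i \<in> ternary_strings t" "differ_one C (first_C i)" "first_C i \<noteq> C"
    "hamming_between C C' (first_C i)"
proof -
  have i: "i < t" "C' ! i \<noteq> C ! i"
    using assms by (auto simp: diff_positions_def)
  show "first_C i \<in> ternary_strings t" "differ_one C (first_C i)"
    unfolding first_C_def using i nth_ternary_le[OF C' i(1)]
    by (simp_all add: list_update_ternary differ_one_list_update)
  then show "first_C i \<noteq> C" by (simp add: differ_one_neq differ_one_sym)
  show "hamming_between C C' (first_C i)"
    using i by (auto simp: first_C_def hamming_between_def nth_list_update)
qed

lemma first_C_eq_iff: "i \<in> DC \<Longrightarrow> j \<in> DC \<Longrightarrow> first_C i = first_C j \<longleftrightarrow> i = j"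
  unfolding first_C_def
  by (subst list_update_eq_list_update_iff) (auto simp: diff_positions_def)

lemma cyclic_succ_DC:
  assumes "i \<in> DC" "card DC \<noteq> 1"
  shows "cyclic_succ DC i \<in> DC" "cyclic_succ DC i \<noteq> i"
proof -
  have "DC \<noteq> {i}" using assms(2) by auto
  with assms(1) show "cyclic_succ DC i \<in> DC" "cyclic_succ DC i \<noteq> i"
    by (simp_all add: cyclic_succ_in cyclic_succ_neq)
qed

lemma last_C:
  assumes "i \<in> DC" "card DC \<noteq> 1"
  shows "last_C i \<in> ternary_strings t" "differ_one (last_C i) C'" "last_C i \<noteq> C'"
    "hamming_between C C' (last_C i)"
proof -
  define j where "j = cyclic_succ DC i"
  have j: "j < t" "C ! j \<noteq> C' ! j"
    using cyclic_succ_DC[OF assms] by (auto simp: j_def diff_positions_def)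
  show "last_C i \<in> ternary_strings t" "differ_one (last_C i) C'"
    unfolding last_C_def j_def[symmetric] using j nth_ternary_le[OF C j(1)]
    by (simp_all add: list_update_ternary differ_one_list_update differ_one_sym)
  then show "last_C i \<noteq> C'" by (simp add: differ_one_neq)
  show "hamming_between C C' (last_C i)"
    using j by (auto simp: last_C_def j_def[symmetric] hamming_between_def nth_list_update)
qed

lemma last_C_eq_iff:
  assumes "i \<in> DC" "j \<in> DC" "card DC \<noteq> 1"
  shows "last_C i = last_C j \<longleftrightarrow> i = j"
proof -
  have "cyclic_succ DC i = cyclic_succ DC j \<longleftrightarrow> i = j"
    using inj_on_cyclic_succ[of DC] assms(1,2) by (auto dest: inj_onD)
  moreover have "cyclic_succ DC i < length C'" "cyclic_succ DC j < length C'"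
    "C ! cyclic_succ DC i \<noteq> C' ! cyclic_succ DC i" "C ! cyclic_succ DC j \<noteq> C' ! cyclic_succ DC j"
    using cyclic_succ_DC(1)[OF assms(1,3)] cyclic_succ_DC(1)[OF assms(2,3)] by (auto simp: diff_positions_def)
  ultimately show ?thesis
    unfolding last_C_def by (subst list_update_eq_list_update_iff) auto
qed

lemma card_diff_positions_first_last_C:
  assumes "i \<in> DC" "card DC \<noteq> 1"
  shows "card (diff_positions (first_C i) (last_C i)) = card DC - 2"
proof -
  define j where "j = cyclic_succ DC i"
  have j: "j \<in> DC" "j \<noteq> i"
    using cyclic_succ_DC[OF assms] by (auto simp: j_def)
  have "last_C i = C'[j := C ! j]"
    by (simp add: last_C_def j_def)
  then have "diff_positions (first_C i) (last_C i) = DC - {i, j}"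
    using assms(1) j by (auto simp: diff_positions_def first_C_def nth_list_update)
  with assms(1) j show ?thesis
    by (simp add: card_Diff_subset)
qed

lemma differ_one_C_C': "card DC = 1 \<Longrightarrow> differ_one C C'"
  by (simp add: differ_one_iff_card)

lemma Level1_path:
  "E3C_path r s t (A, B, C, 0) (A, B', C', 0) ((A, B, C, 0) # interior0 Level1 @ [(A, B', C', 0)])
   \<and> length (interior0 Level1) < s + t + 7"
proof (cases "card DC = 1")
  case True
  then show ?thesis
    using B_neq C_neq length_BC_route_le[of A r B s B' C t C] differ_one_C_C'
    by (intro conjI E3C_path_Cons_snoc)
      (auto simp: successively_BC_route distinct_BC_route E3C_adj_iff, auto simp: BC_route_def)
next
  case False
  then show ?thesis
    using B_neq C_neq B_detour length_CB_route_le[of A r B_detour s B' C t C']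
    by (intro conjI E3C_path_Cons_snoc)
      (auto simp: successively_Cons successively_CB_route distinct_CB_route E3C_adj_iff length_ternary,
       auto simp: CB_route_def)
qed

lemma Level2_path:
  "E3C_path r s t (A, B, C, 0) (A, B', C', 0) ((A, B, C, 0) # interior0 Level2 @ [(A, B', C', 0)])
   \<and> length (interior0 Level2) < s + t + 7"
  using B_neq a_Level2 length_BC_route_le[of a_Level2 r B s B' C t C']
  by (intro conjI E3C_path_Cons_snoc)
    (auto simp: successively_Cons_snoc_iff successively_BC_route_at2 distinct_BC_route_at2 E3C_adj_iff
       length_BC_route_at2, auto simp: BC_route_at2_def BC_route_def)

lemma Off_path:
  assumes "Off i x \<in> set routes0"
  shows "E3C_path r s t (A, B, C, 0) (A, B', C', 0) ((A, B, C, 0) # interior0 (Off i x) @ [(A, B', C', 0)])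
    \<and> length (interior0 (Off i x)) < s + t + 7"
proof -
  note i = Off_in_routes0[OF assms]
  have i_t: "i < t" using i(1) r_le_t by simp
  have ternary: "C[i := x] \<in> ternary_strings t" "C'[i := x] \<in> ternary_strings t"
    using i(2) by (simp_all add: list_update_ternary)
  have differ: "differ_one C (C[i := x])" "differ_one (C'[i := x]) C'"
    using i i_t by (simp_all add: differ_one_list_update differ_one_sym)
  have not_C': "W \<noteq> C'" if "W \<in> set (hamming_walk (C[i := x]) (C'[i := x]))" for W
    using hamming_between_update_nth[OF hamming_between_walk[OF _ that]] i i_t by auto
  show ?thesis
    using B_neq ternary differ not_C' differ_one_neq[OF differ(1)]
      length_BC_route_le[of A r B s B' "C[i := x]" t "C'[i := x]"]
    by (intro conjI E3C_path_Cons_snoc)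
      (auto simp: successively_Cons successively_BC_route distinct_BC_route E3C_adj_iff,
       auto simp: BC_route_def)
qed

lemma Flip_path:
  assumes "Flip i \<in> set routes0"
  shows "E3C_path r s t (A, B, C, 0) (A, B', C', 0) ((A, B, C, 0) # interior0 (Flip i) @ [(A, B', C', 0)])
    \<and> length (interior0 (Flip i)) < s + t + 7"
proof (cases "card DC = 1")
  case True
  then show ?thesis
    using B_neq C_neq length_CB_route_le[of A r B s B' C' t C'] differ_one_C_C'
    by (intro conjI E3C_path_Cons_snoc)
      (auto simp: successively_CB_route distinct_CB_route E3C_adj_iff, auto simp: CB_route_def)
next
  case False
  note i = Flip_in_routes0[OF assms]
  let ?Cf = "first_C i" and ?Cl = "last_C i"
  have "length (BC_route (a_Flip i) B B' ?Cf ?Cl) \<le> s + (card DC - 2) + 2"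
    using card_diff_positions_le[of B B'] card_diff_positions_first_last_C[OF i(2) False]
      first_C(1)[OF i(2)] last_C(1)[OF i(2) False]
    by (simp add: length_BC_route length_ternary)
  moreover have "card DC \<le> t"
    using card_diff_positions_le[of C C'] by simp
  moreover have "card DC \<noteq> 0"
    using i(2) by auto
  with False have "2 \<le> card DC"
    by presburger
  ultimately have "length (interior0 (Flip i)) < s + t + 7"
    using False by (simp add: length_BC_route_at2)
  then show ?thesis
    using B_neq a_Flip[OF i(1)] first_C[OF i(2)] last_C[OF i(2) False] False
    by (intro conjI E3C_path_Cons_snoc)
      (auto simp: successively_Cons successively_append_iff successively_BC_route_at2
         distinct_BC_route_at2 E3C_adj_iff differ_one_sym, auto simp: BC_route_at2_def BC_route_def)
qed

lemma interior0_path: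
  assumes "k \<in> set routes0"
  shows "E3C_path r s t (A, B, C, 0) (A, B', C', 0) ((A, B, C, 0) # interior0 k @ [(A, B', C', 0)])
    \<and> length (interior0 k) < s + t + 7"
proof (cases k)
  case (Off i x)
  then show ?thesis using Off_path assms by blast
next
  case (Flip i)
  then show ?thesis using Flip_path assms by blast
qed (use Level1_path Level2_path in blast)+

lemma interior0_Off_C:
  assumes "(a, Y, W, e) \<in> set (interior0 (Off i x))"
  shows "a = A \<and> hamming_between (C[i := x]) (C'[i := x]) W"
  using assms hamming_between_ends[of "C[i := x]" "C'[i := x]"] hamming_between_walk[of "C[i := x]" "C'[i := x]" W]
  by (auto simp: BC_route_def)

lemma interior0_C_between:
  assumes "k \<in> set routes0" "\<forall>i x. k \<noteq> Off i x" "(a, Y, W, e) \<in> set (interior0 k)"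
  shows "hamming_between C C' W"
proof -
  have ends: "hamming_between C C' C" "hamming_between C C' C'"
    using hamming_between_ends[of C C'] by simp_all
  have walk: "hamming_between C C' W" if "W \<in> set (hamming_walk C C')"
    using hamming_between_walk[OF _ that] by simp
  show ?thesis
  proof (cases k)
    case (Flip i)
    note i = Flip_in_routes0[OF assms(1)[unfolded Flip]]
    show ?thesis
    proof (cases "card DC = 1")
      case True
      then show ?thesis using assms(3) ends by (auto simp: Flip CB_route_def)
    next
      case False
      note first = first_C(1,4)[OF i(2)] and last = last_C(1,4)[OF i(2) False]
      have "hamming_between C C' W" if "W \<in> set (hamming_walk (first_C i) (last_C i))"
        using hamming_between_trans[OF first(2) last(2) hamming_between_walk[OF _ that]] first last
        by (simp add: length_ternary)
      then show ?thesis
        using assms(3) first last False by (auto simp: Flip BC_route_at2_def BC_route_def)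
    qed
  qed (use assms ends walk in \<open>auto simp: BC_route_at2_def BC_route_def CB_route_def split: if_splits\<close>)
qed

lemma Off_disjoint:
  assumes "Off i x \<in> set routes0" "k \<in> set routes0" "k \<noteq> Off i x"
  shows "set (interior0 (Off i x)) \<inter> set (interior0 k) = {}"
proof (rule ccontr)
  assume "set (interior0 (Off i x)) \<inter> set (interior0 k) \<noteq> {}"
  then obtain a Y W e where z: "(a, Y, W, e) \<in> set (interior0 (Off i x))" "(a, Y, W, e) \<in> set (interior0 k)"
    by (metis disjoint_iff prod_cases4)
  note i = Off_in_routes0[OF assms(1)]
  have Off_C: "hamming_between (C[i := x]) (C'[i := x]) W"
    using interior0_Off_C[OF z(1)] by simp
  show False
  proof (cases "\<exists>j y. k = Off j y")
    case True
    then obtain j y where k: "k = Off j y" by blast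
    note j = Off_in_routes0[OF assms(2)[unfolded k]]
    have "i = j \<and> x = y"
      using hamming_between_update_unique[OF Off_C interior0_Off_C[OF z(2)[unfolded k], THEN conjunct2]]
        i j r_le_t by simp
    with assms(3) k show False by simp
  next
    case False
    with interior0_C_between[OF assms(2) _ z(2)] have "hamming_between C C' W" by blast
    with hamming_between_update_absurd[OF _ Off_C] i r_le_t show False by simp
  qed
qed

lemma DC_singleton: "card DC = 1 \<Longrightarrow> i \<in> DC \<Longrightarrow> j \<in> DC \<Longrightarrow> i = j"
  by (metis card_1_singletonE singletonD)

lemma Level1_Level2_disjoint: "set (interior0 Level1) \<inter> set (interior0 Level2) = {}"
  using a_Level2 by (auto simp: BC_route_at2_def BC_route_def CB_route_def)

lemma Level1_Flip_disjoint:
  assumes "Flip i \<in> set routes0"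
  shows "set (interior0 Level1) \<inter> set (interior0 (Flip i)) = {}"
proof (cases "card DC = 1")
  case True
  then show ?thesis
    using B_neq C_neq by (auto simp: BC_route_def CB_route_def)
next
  case False
  then show ?thesis
    using B_neq B_detour a_Flip(4)[OF Flip_in_routes0(1)[OF assms]]
    by (auto simp: BC_route_at2_def BC_route_def CB_route_def)
qed

lemma Level2_Flip_disjoint:
  assumes "Flip i \<in> set routes0"
  shows "set (interior0 Level2) \<inter> set (interior0 (Flip i)) = {}"
proof (cases "card DC = 1")
  case True
  then show ?thesis
    using a_Level2 by (auto simp: BC_route_at2_def BC_route_def CB_route_def)
next
  case False
  note i = Flip_in_routes0[OF assms]
  show ?thesis
    using False a_Level2 B_neq a_Flip[OF i(1)] first_C(3)[OF i(2)] last_C(3)[OF i(2) False]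
    by (auto simp: BC_route_at2_def BC_route_def)
qed

lemma Flip_Flip_disjoint:
  assumes "Flip i \<in> set routes0" "Flip j \<in> set routes0" "i \<noteq> j"
  shows "set (interior0 (Flip i)) \<inter> set (interior0 (Flip j)) = {}"
proof -
  note i = Flip_in_routes0[OF assms(1)] and j = Flip_in_routes0[OF assms(2)]
  have "card DC \<noteq> 1"
    using DC_singleton i(2) j(2) assms(3) by blast
  then show ?thesis
    using assms(3) B_neq a_Flip(4)[OF i(1)] a_Flip(4)[OF j(1)] a_Flip_eq_iff[OF i(1) j(1)]
      first_C_eq_iff[OF i(2) j(2)] last_C_eq_iff[OF i(2) j(2)]
    by (auto simp: BC_route_at2_def BC_route_def)
qed

lemma interior0_disjoint:
  assumes "k \<in> set routes0" "k' \<in> set routes0" "k \<noteq> k'"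
  shows "set (interior0 k) \<inter> set (interior0 k') = {}"
proof -
  have levels: "Level1 \<in> set routes0" "Level2 \<in> set routes0"
    by (simp_all add: routes0_def)
  have Level1: "set (interior0 Level1) \<inter> set (interior0 k'') = {}"
    if "k'' \<in> set routes0" "k'' \<noteq> Level1" for k''
    using that levels Level1_Level2_disjoint Level1_Flip_disjoint Off_disjoint[of _ _ Level1]
    by (cases k'' rule: route0.exhaust) (simp_all add: Int_commute)
  have Level2: "set (interior0 Level2) \<inter> set (interior0 k'') = {}"
    if "k'' \<in> set routes0" "k'' \<noteq> Level2" for k''
    using that levels Level1_Level2_disjoint Level2_Flip_disjoint Off_disjoint[of _ _ Level2]
    by (cases k'' rule: route0.exhaust) (simp_all add: Int_commute)
  have Flip: "set (interior0 (Flip i)) \<inter> set (interior0 k'') = {}"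
    if "Flip i \<in> set routes0" "k'' \<in> set routes0" "k'' \<noteq> Flip i" for i k''
    using that levels Level1_Flip_disjoint Level2_Flip_disjoint Flip_Flip_disjoint Off_disjoint[of _ _ "Flip i"]
    by (cases k'' rule: route0.exhaust) (simp_all add: Int_commute)
  show ?thesis
    using assms Level1 Level2 Flip Off_disjoint by (cases k rule: route0.exhaust) simp_all
qed

theorem disjoint_paths_level0:
  "E3C_disjoint_paths r s t (A, B, C, 0) (A, B', C', 0) (2 * r + 2) (s + t + 7)"
  using E3C_disjoint_paths_from_interiors[OF distinct_routes0 interior0_path interior0_disjoint]
  by (simp add: length_routes0)

end

section \<open>Exchanging \<open>B\<close> and \<open>C\<close>\<close>

definition swap01 :: "nat \<Rightarrow> nat" where
  "swap01 d = (if d = 0 then 1 else if d = 1 then 0 else d)"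

fun swap_BC :: "vtx \<Rightarrow> vtx" where
  "swap_BC (A, B, C, d) = (A, C, B, swap01 d)"

lemma swap01_simps [simp]:
  "swap01 d = 0 \<longleftrightarrow> d = 1" "swap01 d = 1 \<longleftrightarrow> d = 0" "swap01 d = 2 \<longleftrightarrow> d = 2"
  "swap01 d = swap01 d' \<longleftrightarrow> d = d'" "swap01 d \<le> 2 \<longleftrightarrow> d \<le> 2"
  by (auto simp: swap01_def)

lemma inj_swap_BC: "inj swap_BC"
  by (rule injI) (metis swap_BC.simps prod_cases4 prod.inject swap01_simps(4))

lemma E3C_adj_swap_BC:
  assumes "E3C_adj r t s x y"
  shows "E3C_adj r s t (swap_BC x) (swap_BC y)"
proof -
  obtain A B C d A' B' C' d' where xy: "x = (A, B, C, d)" "y = (A', B', C', d')"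
    by (cases x, cases y) auto
  from assms have "E3C_adj r t s (A, B, C, d) (A', B', C', d')"
    by (simp add: xy)
  then show ?thesis
    unfolding xy swap_BC.simps E3C_adj_iff by (simp only: E3C_vertices_iff swap01_simps) blast
qed

lemma E3C_path_swap_BC: "E3C_path r t s u v p \<Longrightarrow> E3C_path r s t (swap_BC u) (swap_BC v) (map swap_BC p)"
  by (auto simp: E3C_path_def hd_map last_map distinct_map E3C_adj_swap_BC inj_on_subset[OF inj_swap_BC])

lemma internally_disjoint_swap_BC:
  assumes "internally_disjoint u v p q"
  shows "internally_disjoint (swap_BC u) (swap_BC v) (map swap_BC p) (map swap_BC q)"
proof -
  have "set (map swap_BC p) \<inter> set (map swap_BC q) = swap_BC ` (set p \<inter> set q)"
    by (simp add: image_Int[OF inj_swap_BC])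
  with assms show ?thesis
    by (auto simp: internally_disjoint_def)
qed

lemma E3C_disjoint_paths_swap_BC:
  assumes "E3C_disjoint_paths r t s u v n L"
  shows "E3C_disjoint_paths r s t (swap_BC u) (swap_BC v) n L"
proof -
  obtain P where P: "length P = n"
    "\<forall>i < length P. E3C_path r t s u v (P ! i) \<and> path_len (P ! i) \<le> L"
    "\<forall>i < length P. \<forall>j < length P. i \<noteq> j \<longrightarrow> internally_disjoint u v (P ! i) (P ! j)"
    using assms unfolding E3C_disjoint_paths_def by blast
  show ?thesis
    unfolding E3C_disjoint_paths_def
  proof (intro exI conjI allI impI)
    let ?Q = "map (map swap_BC) P"
    show "length ?Q = n" using P(1) by simp
    fix i assume "i < length ?Q"
    then show "E3C_path r s t (swap_BC u) (swap_BC v) (?Q ! i)" "path_len (?Q ! i) \<le> L"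
      using P(2) E3C_path_swap_BC by (auto simp: path_len_def)
    fix j assume "j < length ?Q" "i \<noteq> j"
    then show "internally_disjoint (swap_BC u) (swap_BC v) (?Q ! i) (?Q ! j)"
      using P(3) \<open>i < length ?Q\<close> internally_disjoint_swap_BC by simp
  qed
qed

theorem lemma9:
  fixes r s t :: nat and A A' B B' C C' :: "nat list" and d d' :: nat
  assumes "1 \<le> r" and "r \<le> s" and "s \<le> t"
    and "(A, B, C, d) \<in> E3C_vertices r s t"
    and "(A', B', C', d') \<in> E3C_vertices r s t"
    and "A = A'" and "B \<noteq> B'" and "C \<noteq> C'" and "d = d'"
  shows "\<exists>P :: vtx list list. length P = 2 * r + 2 \<and>
           (\<forall>i < length P. E3C_path r s t (A, B, C, d) (A', B', C', d') (P ! i) \<and>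
              path_len (P ! i) \<le> (if d \<in> {0, 1} then s + t + 7 else s + t + 5)) \<and>
           (\<forall>i < length P. \<forall>j < length P. i \<noteq> j \<longrightarrow>
              internally_disjoint (A, B, C, d) (A', B', C', d') (P ! i) (P ! j))"
proof -
  have strings: "A \<in> ternary_strings r" "B \<in> ternary_strings s" "B' \<in> ternary_strings s"
    "C \<in> ternary_strings t" "C' \<in> ternary_strings t" "d \<le> 2"
    using assms(4-6) by auto
  obtain ns where ns: "length ns = 2 * r" "distinct ns" "\<forall>a \<in> set ns. a \<in> ternary_strings r \<and> differ_one A a"
    using ternary_neighbours_exist[OF strings(1)] by blast
  from strings(6) consider "d = 0" | "d = 1" | "d = 2"
    by linarith
  then have "E3C_disjoint_paths r s t (A, B, C, d) (A, B', C', d) (2 * r + 2)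
               (if d \<in> {0, 1} then s + t + 7 else s + t + 5)"
  proof cases
    case 1
    interpret E3C_vertex_pair_level0 r s t A B B' C C' ns
      using assms(1-3,7,8) strings ns by unfold_locales auto
    show ?thesis using disjoint_paths_level0 1 by simp
  next
    case 2
    interpret swapped: E3C_vertex_pair_level0 r t s A C C' B B' ns
      using assms(1-3,7,8) strings ns by unfold_locales auto
    show ?thesis
      using E3C_disjoint_paths_swap_BC[OF swapped.disjoint_paths_level0] 2
      by (simp add: swap01_def add.commute)
  next
    case 3
    interpret E3C_vertex_pair r s t A B B' C C' ns
      using assms(7,8) strings ns by unfold_locales auto
    show ?thesis using disjoint_paths_level2 3 by simp
  qed
  with assms(6,9) show ?thesis
    unfolding E3C_disjoint_paths_def by simp
qed

end
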